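(* Let $G$ be a finite digraph without sources, and suppose its vertices can be ordered as $v_1,\dots,v_n$ so that for all $i<j$, if $v_jv_i\in E(G)$ then also $v_iv_j\in E(G)$. Then $G$ has a quasi-kernel with at most $n/2$ vertices.
   Context: Digraphs are finite, without loops and without multiple edges in the same direction; anti-parallel edges are allowed. An edge $uv$ goes from $u$ to $v$. For $V'\subseteq V(G)$, $\Gamma^+(V')$ is the set of out-neighbours of vertices of $V'$, $\Gamma^+_1(V')=V'\cup\Gamma^+(V')$ and $\Gamma^+_2(V')=V'\cup\Gamma^+(V')\cup\Gamma^+(\Gamma^+(V'))$. A source is a vertex of in-degree $0$. A quasi-kernel of $G$ is an independent set $Q\subseteq V(G)$ with $\Gamma^+_2(Q)=V(G)$. *)

theory Defs
  imports Main
begin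

text \<open>Loops are excluded; multiple edges are
  impossible by construction; anti-parallel edges are allowed.\<close>

definition digraph :: "'a set \<Rightarrow> ('a \<times> 'a) set \<Rightarrow> bool" where
  "digraph V E \<longleftrightarrow> finite V \<and> E \<subseteq> V \<times> V \<and> (\<forall>v. (v, v) \<notin> E)"

definition out_nbhd :: "('a \<times> 'a) set \<Rightarrow> 'a set \<Rightarrow> 'a set" where
  "out_nbhd E S = {v. \<exists>u\<in>S. (u, v) \<in> E}"

definition out_nbhd1 :: "('a \<times> 'a) set \<Rightarrow> 'a set \<Rightarrow> 'a set" where
  "out_nbhd1 E S = S \<union> out_nbhd E S"

definition out_nbhd2 :: "('a \<times> 'a) set \<Rightarrow> 'a set \<Rightarrow> 'a set" where
  "out_nbhd2 E S = S \<union> out_nbhd E S \<union> out_nbhd E (out_nbhd E S)"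

definition is_source :: "'a set \<Rightarrow> ('a \<times> 'a) set \<Rightarrow> 'a \<Rightarrow> bool" where
  "is_source V E v \<longleftrightarrow> v \<in> V \<and> (\<forall>u. (u, v) \<notin> E)"

definition independent :: "('a \<times> 'a) set \<Rightarrow> 'a set \<Rightarrow> bool" where
  "independent E S \<longleftrightarrow> (\<forall>u\<in>S. \<forall>v\<in>S. (u, v) \<notin> E)"

definition quasi_kernel :: "'a set \<Rightarrow> ('a \<times> 'a) set \<Rightarrow> 'a set \<Rightarrow> bool" where
  "quasi_kernel V E Q \<longleftrightarrow> Q \<subseteq> V \<and> independent E Q \<and> out_nbhd2 E Q = V"

end

theory Submission
  imports Defs
begin

text \<open>Along the ordering, greedily build an independent set \<open>K\<close> such that every vertex
  outside \<open>K\<close> has an in-neighbour in \<open>K\<close>: a vertex joins unless an earlier chosen vertex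
  points to it, and it cannot point to an earlier chosen vertex, since that edge would be
  reversed. Such a \<open>K\<close> is a quasi-kernel. As \<open>G\<close> has no sources, every vertex of \<open>K\<close> has
  an in-neighbour outside \<open>K\<close>, so the same construction on \<open>V - K\<close> yields a second,
  disjoint quasi-kernel \<open>K'\<close>; one of the two has at most \<open>n/2\<close> vertices.\<close>

definition indep_dominating :: "('a \<times> 'a) set \<Rightarrow> 'a set \<Rightarrow> 'a set \<Rightarrow> bool" where
  "indep_dominating E S K \<longleftrightarrow> K \<subseteq> S \<and> independent E K \<and> (\<forall>u\<in>S - K. \<exists>k\<in>K. (k, u) \<in> E)"

definition backward_edges_symmetric :: "('a \<times> 'a) set \<Rightarrow> 'a list \<Rightarrow> bool" where
  "backward_edges_symmetric E vs \<longleftrightarrow>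
     (\<forall>i j. i < j \<and> j < length vs \<longrightarrow> (vs ! j, vs ! i) \<in> E \<longrightarrow> (vs ! i, vs ! j) \<in> E)"

lemma backward_edges_symmetric_butlast:
  assumes "backward_edges_symmetric E (xs @ [x])"
  shows "backward_edges_symmetric E xs"
  unfolding backward_edges_symmetric_def
proof (intro allI impI)
  fix i j assume ij: "i < j \<and> j < length xs" and "(xs ! j, xs ! i) \<in> E"
  moreover have "((xs @ [x]) ! j, (xs @ [x]) ! i) \<in> E \<longrightarrow> ((xs @ [x]) ! i, (xs @ [x]) ! j) \<in> E"
    using assms ij unfolding backward_edges_symmetric_def by simp
  ultimately have "((xs @ [x]) ! i, (xs @ [x]) ! j) \<in> E"
    using ij by (simp add: nth_append)
  with ij show "(xs ! i, xs ! j) \<in> E" by (simp add: nth_append)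
qed

lemma backward_edges_symmetric_last:
  assumes "backward_edges_symmetric E (xs @ [x])" and "k \<in> set xs" and "(x, k) \<in> E"
  shows "(k, x) \<in> E"
proof -
  obtain i where i: "i < length xs" "xs ! i = k"
    using assms(2) by (auto simp: in_set_conv_nth)
  have "((xs @ [x]) ! length xs, (xs @ [x]) ! i) \<in> E \<longrightarrow> ((xs @ [x]) ! i, (xs @ [x]) ! length xs) \<in> E"
    using spec[OF spec[OF assms(1)[unfolded backward_edges_symmetric_def], of i], of "length xs"] i(1)
    by simp
  then have "((xs @ [x]) ! i, (xs @ [x]) ! length xs) \<in> E"
    using assms(3) i by (simp add: nth_append)
  with i show ?thesis by (simp add: nth_append)
qed

lemma indep_dominating_insert:
  assumes "indep_dominating E S K" and "x \<notin> S" and "\<forall>k\<in>K. (k, x) \<notin> E" and "(x, x) \<notin> E"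
    and "\<forall>k\<in>K. (x, k) \<notin> E"
  shows "indep_dominating E (insert x S) (insert x K)"
  using assms unfolding indep_dominating_def independent_def by blast

lemma indep_dominating_ordered:
  assumes "backward_edges_symmetric E xs" and "\<forall>v. (v, v) \<notin> E"
  shows "\<exists>K. indep_dominating E (set xs \<inter> S) K"
  using assms(1)
proof (induction xs rule: rev_induct)
  case Nil
  show ?case by (auto simp: indep_dominating_def independent_def)
next
  case (snoc x xs)
  obtain K where K: "indep_dominating E (set xs \<inter> S) K"
    using snoc.IH[OF backward_edges_symmetric_butlast[OF snoc.prems]] ..
  show ?case
  proof (cases "x \<in> S - set xs \<and> (\<forall>k\<in>K. (k, x) \<notin> E)")
    case True
    have "(x, k) \<notin> E" if "k \<in> K" for k
    proof
      assume "(x, k) \<in> E"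
      moreover have "k \<in> set xs" using K that unfolding indep_dominating_def by blast
      ultimately have "(k, x) \<in> E" using backward_edges_symmetric_last[OF snoc.prems] by blast
      with True that show False by blast
    qed
    then have "indep_dominating E (insert x (set xs \<inter> S)) (insert x K)"
      using indep_dominating_insert[OF K] True assms(2) by blast
    moreover have "insert x (set xs \<inter> S) = set (xs @ [x]) \<inter> S" using True by auto
    ultimately show ?thesis by auto
  next
    case False
    then have "indep_dominating E (set (xs @ [x]) \<inter> S) K"
      using K unfolding indep_dominating_def by auto
    then show ?thesis ..
  qed
qed

lemma out_nbhd2_subset:
  assumes "E \<subseteq> V \<times> V" and "Q \<subseteq> V"
  shows "out_nbhd2 E Q \<subseteq> V"
  using assms unfolding out_nbhd2_def out_nbhd_def by auto

lemma indep_dominating_imp_quasi_kernel: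
  assumes "E \<subseteq> V \<times> V" and "indep_dominating E V K"
  shows "quasi_kernel V E K"
proof -
  have "V \<subseteq> out_nbhd2 E K"
    using assms(2) unfolding indep_dominating_def out_nbhd2_def out_nbhd_def by blast
  with assms out_nbhd2_subset[OF assms(1)] show ?thesis
    unfolding quasi_kernel_def indep_dominating_def by blast
qed

lemma indep_dominating_complement_imp_quasi_kernel:
  assumes "E \<subseteq> V \<times> V" and "\<forall>v\<in>V. \<not> is_source V E v"
    and "indep_dominating E V K" and "indep_dominating E (V - K) K'"
  shows "quasi_kernel V E K'"
proof -
  have "v \<in> out_nbhd2 E K'" if v: "v \<in> V" for v
  proof (cases "v \<in> K")
    case True
    then obtain u where "(u, v) \<in> E"
      using assms(2) v unfolding is_source_def by blast
    moreover from this True have "u \<in> V - K"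
      using assms(1,3) unfolding indep_dominating_def independent_def by blast
    ultimately show ?thesis
      using assms(4) unfolding indep_dominating_def out_nbhd2_def out_nbhd_def by blast
  next
    case False
    with v assms(4) show ?thesis
      unfolding indep_dominating_def out_nbhd2_def out_nbhd_def by blast
  qed
  moreover have "K' \<subseteq> V" using assms(4) unfolding indep_dominating_def by blast
  ultimately show ?thesis
    using assms(4) out_nbhd2_subset[OF assms(1)]
    unfolding quasi_kernel_def indep_dominating_def by blast
qed

lemma disjoint_subsets_half_card:
  assumes "finite V" and "A \<subseteq> V" and "B \<subseteq> V - A"
  shows "2 * card A \<le> card V \<or> 2 * card B \<le> card V"
proof -
  have "card A + card B = card (A \<union> B)"
    using assms by (intro card_Un_disjoint[symmetric]) (auto intro: finite_subset)
  also have "\<dots> \<le> card V"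
    using assms by (intro card_mono) auto
  finally show ?thesis by linarith
qed

theorem mainTheorem1:
  fixes V :: "'a set" and E :: "('a \<times> 'a) set" and vs :: "'a list"
  assumes "digraph V E"
    and "\<forall>v\<in>V. \<not> is_source V E v"
    and "distinct vs" and "set vs = V"
    and "\<forall>i j. i < j \<and> j < length vs \<longrightarrow> (vs ! j, vs ! i) \<in> E \<longrightarrow> (vs ! i, vs ! j) \<in> E"
  shows "\<exists>Q. quasi_kernel V E Q \<and> 2 * card Q \<le> card V"
proof -
  have fin: "finite V" and edges: "E \<subseteq> V \<times> V" and loopless: "\<forall>v. (v, v) \<notin> E"
    using assms(1) unfolding digraph_def by auto
  have order: "backward_edges_symmetric E vs"
    using assms(5) unfolding backward_edges_symmetric_def .
  have restrict: "set vs \<inter> S = S" if "S \<subseteq> V" for S using that assms(4) by blast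
  obtain K where K: "indep_dominating E V K"
    using indep_dominating_ordered[OF order loopless, of V] restrict[of V] by auto
  obtain K' where K': "indep_dominating E (V - K) K'"
    using indep_dominating_ordered[OF order loopless, of "V - K"] restrict[of "V - K"] by auto
  have "2 * card K \<le> card V \<or> 2 * card K' \<le> card V"
    using fin K K' unfolding indep_dominating_def by (intro disjoint_subsets_half_card) auto
  then show ?thesis
    using indep_dominating_imp_quasi_kernel[OF edges K]
      indep_dominating_complement_imp_quasi_kernel[OF edges assms(2) K K'] by blast
qed

end
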